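(* $\mathrm{UF}_1^=$ and $\mathrm{FOC}^2$ are incomparable in expressivity: neither $\mathrm{UF}_1^=\leq\mathrm{FOC}^2$ nor $\mathrm{FOC}^2\leq\mathrm{UF}_1^=$ holds.
   Context: Vocabularies are relational (relation symbols of positive finite arities, no constants or function symbols). A $k$-ary $\tau$-atom is an atomic formula (a relational atom $R(z_1,\dots,z_m)$ with $R\in\tau$, or an equality $z=z'$) having exactly $k$ distinct free variables. For a finite set $V$ of variables, a $V$-uniform set is a finite set of relational (non-equality) $\tau$-atoms $R(z_1,\dots,z_m)$ with $\{z_1,\dots,z_m\}=V$. The set $\mathrm{UF}_1^=(\tau)$ is the smallest set $\mathcal F$ such that: (1) every unary $\tau$-atom, and $\bot,\top$, are in $\mathcal F$; (2) every equality $x=y$ is in $\mathcal F$; (3) $\mathcal F$ is closed under $\neg$ and $\wedge$; (4) if $X=\{x_0,\dots,x_k\}$ is a finite set of variables, $U$ a finite set of formulas of $\mathcal F$ with free variables in $X$, $V\subseteq X$, $F$ a $V$-uniform set of $\tau$-atoms, and $\varphi$ a Boolean combination of formulas in $U\cup F$, then $\exists x_1\dots\exists x_k\,\varphi\in\mathcal F$ and $\exists x_0\dots\exists x_k\,\varphi\in\mathcal F$. $\mathrm{UF}_1^=$ is the union of $\mathrm{UF}_1^=(\tau)$ over all vocabularies; $\forall$ and other connectives are abbreviations. $\mathrm{FOC}^2$ is the two-variable fragment of first-order logic with equality extended by counting quantifiers $\exists^{\geq k}$ ($k$ a positive integer): formulas built using only two variable symbols. For fragments $\mathcal L,\mathcal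 L'$ of first-order logic, $\mathcal L\leq\mathcal L'$ means that every sentence of $\mathcal L$ is equivalent to some sentence of $\mathcal L'$. *)

theory Defs
  imports Main
begin

text \<open>A relation symbol is a pair (name, arity);
  a vocabulary is a set of relation symbols of positive arity.
  ExGe k x phi is the counting quantifier "there exist at least k elements x with phi";
  the ordinary existential quantifier is ExGe 1.\<close>

type_synonym rsym = "nat \<times> nat"

datatype fm =
    Bot
  | Top
  | Rel rsym "nat list"
  | Eq nat nat
  | Neg fm
  | Conj fm fm
  | ExGe nat nat fm

abbreviation Ex1q :: "nat \<Rightarrow> fm \<Rightarrow> fm" where
  "Ex1q x \<phi> \<equiv> ExGe 1 x \<phi>"

definition exs :: "nat list \<Rightarrow> fm \<Rightarrow> fm" where
  "exs xs \<phi> = foldr Ex1q xs \<phi>"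

fun fv :: "fm \<Rightarrow> nat set" where
  "fv Bot = {}"
| "fv Top = {}"
| "fv (Rel R zs) = set zs"
| "fv (Eq x y) = {x, y}"
| "fv (Neg \<phi>) = fv \<phi>"
| "fv (Conj \<phi> \<psi>) = fv \<phi> \<union> fv \<psi>"
| "fv (ExGe k x \<phi>) = fv \<phi> - {x}"

fun vars :: "fm \<Rightarrow> nat set" where
  "vars Bot = {}"
| "vars Top = {}"
| "vars (Rel R zs) = set zs"
| "vars (Eq x y) = {x, y}"
| "vars (Neg \<phi>) = vars \<phi>"
| "vars (Conj \<phi> \<psi>) = vars \<phi> \<union> vars \<psi>"
| "vars (ExGe k x \<phi>) = insert x (vars \<phi>)"

fun wf :: "fm \<Rightarrow> bool" where
  "wf Bot = True"
| "wf Top = True"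
| "wf (Rel R zs) = (snd R > 0 \<and> length zs = snd R)"
| "wf (Eq x y) = True"
| "wf (Neg \<phi>) = wf \<phi>"
| "wf (Conj \<phi> \<psi>) = (wf \<phi> \<and> wf \<psi>)"
| "wf (ExGe k x \<phi>) = wf \<phi>"

fun pos_counts :: "fm \<Rightarrow> bool" where
  "pos_counts (Neg \<phi>) = pos_counts \<phi>"
| "pos_counts (Conj \<phi> \<psi>) = (pos_counts \<phi> \<and> pos_counts \<psi>)"
| "pos_counts (ExGe k x \<phi>) = (k > 0 \<and> pos_counts \<phi>)"
| "pos_counts _ = True"

fun sat :: "'a set \<Rightarrow> (rsym \<Rightarrow> 'a list \<Rightarrow> bool) \<Rightarrow> (nat \<Rightarrow> 'a) \<Rightarrow> fm \<Rightarrow> bool" where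
  "sat D I e Bot = False"
| "sat D I e Top = True"
| "sat D I e (Rel R zs) = I R (map e zs)"
| "sat D I e (Eq x y) = (e x = e y)"
| "sat D I e (Neg \<phi>) = (\<not> sat D I e \<phi>)"
| "sat D I e (Conj \<phi> \<psi>) = (sat D I e \<phi> \<and> sat D I e \<psi>)"
| "sat D I e (ExGe k x \<phi>) =
     (\<exists>S. S \<subseteq> D \<and> finite S \<and> card S = k \<and> (\<forall>d\<in>S. sat D I (e(x := d)) \<phi>))"

text \<open>Domains are taken to be subsets of nat, i.e. all countable structures; by the downward
  Loewenheim-Skolem theorem this coincides with equivalence over all structures.\<close>
definition equiv_fm :: "fm \<Rightarrow> fm \<Rightarrow> bool" where
  "equiv_fm \<phi> \<psi> \<longleftrightarrow>
     (\<forall>(D::nat set) I e. D \<noteq> {} \<longrightarrow> (\<forall>v. e v \<in> D) \<longrightarrow> (sat D I e \<phi> \<longleftrightarrow> sat D I e \<psi>))"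

definition leq_logic :: "(fm \<Rightarrow> bool) \<Rightarrow> (fm \<Rightarrow> bool) \<Rightarrow> bool" where
  "leq_logic L L' \<longleftrightarrow> (\<forall>\<phi>. L \<phi> \<longrightarrow> (\<exists>\<psi>. L' \<psi> \<and> equiv_fm \<phi> \<psi>))"

inductive bool_comb :: "fm set \<Rightarrow> fm \<Rightarrow> bool" for S where
  base: "\<phi> \<in> S \<Longrightarrow> bool_comb S \<phi>"
| neg: "bool_comb S \<phi> \<Longrightarrow> bool_comb S (Neg \<phi>)"
| conj: "bool_comb S \<phi> \<Longrightarrow> bool_comb S \<psi> \<Longrightarrow> bool_comb S (Conj \<phi> \<psi>)"

definition tau_rel_atom :: "rsym set \<Rightarrow> fm \<Rightarrow> bool" where
  "tau_rel_atom \<tau> a \<longleftrightarrow> (\<exists>R zs. a = Rel R zs \<and> R \<in> \<tau> \<and> length zs = snd R)"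

definition uniform_set :: "rsym set \<Rightarrow> nat set \<Rightarrow> fm set \<Rightarrow> bool" where
  "uniform_set \<tau> V F \<longleftrightarrow> finite F \<and> (\<forall>a\<in>F. tau_rel_atom \<tau> a \<and> fv a = V)"

inductive uf1 :: "rsym set \<Rightarrow> fm \<Rightarrow> bool" for \<tau> where
  unary_rel: "R \<in> \<tau> \<Longrightarrow> length zs = snd R \<Longrightarrow> card (set zs) = 1 \<Longrightarrow> uf1 \<tau> (Rel R zs)"
| bot: "uf1 \<tau> Bot"
| top: "uf1 \<tau> Top"
| eq: "uf1 \<tau> (Eq x y)"
| neg: "uf1 \<tau> \<phi> \<Longrightarrow> uf1 \<tau> (Neg \<phi>)"
| conj: "uf1 \<tau> \<phi> \<Longrightarrow> uf1 \<tau> \<psi> \<Longrightarrow> uf1 \<tau> (Conj \<phi> \<psi>)"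
| ex_rest: "distinct (x0 # xs) \<Longrightarrow> finite U \<Longrightarrow>
      (\<forall>u\<in>U. uf1 \<tau> u \<and> fv u \<subseteq> set (x0 # xs)) \<Longrightarrow>
      V \<subseteq> set (x0 # xs) \<Longrightarrow> uniform_set \<tau> V F \<Longrightarrow> bool_comb (U \<union> F) \<phi> \<Longrightarrow>
      uf1 \<tau> (exs xs \<phi>)"
| ex_all: "distinct (x0 # xs) \<Longrightarrow> finite U \<Longrightarrow>
      (\<forall>u\<in>U. uf1 \<tau> u \<and> fv u \<subseteq> set (x0 # xs)) \<Longrightarrow>
      V \<subseteq> set (x0 # xs) \<Longrightarrow> uniform_set \<tau> V F \<Longrightarrow> bool_comb (U \<union> F) \<phi> \<Longrightarrow>
      uf1 \<tau> (exs (x0 # xs) \<phi>)"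

definition UF1_sentence :: "fm \<Rightarrow> bool" where
  "UF1_sentence \<phi> \<longleftrightarrow>
     (\<exists>\<tau>. (\<forall>R\<in>\<tau>. snd R > 0) \<and> uf1 \<tau> \<phi>) \<and> fv \<phi> = {}"

definition FOC2_sentence :: "fm \<Rightarrow> bool" where
  "FOC2_sentence \<phi> \<longleftrightarrow> wf \<phi> \<and> pos_counts \<phi> \<and> vars \<phi> \<subseteq> {0, 1} \<and> fv \<phi> = {}"

end

theory Submission
  imports Defs "HOL-Combinatorics.Transposition"
begin

text \<open>A formula with two variable symbols evaluates relations only on tuples with at most two
  distinct entries, so no \<open>FOC\<^sup>2\<close> sentence can detect a single triple of distinct elements in a
  ternary relation, which the \<open>UF\<^sub>1\<^sup>=\<close> sentence \<open>\<exists>x y z. R(x,y,z)\<close> does.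

  Conversely, let \<open>G\<^sub>k\<close> be the disjoint union of infinitely many \<open>k\<close>-cliques. Every
  \<open>UF\<^sub>1\<^sup>=\<close> formula has the same truth value in all \<open>G\<^sub>k\<close>, \<open>k \<ge> 2\<close>, under assignments with the
  same equality type. In a quantifier block the relational atoms all share the same variable set,
  hence describe one tuple of values, and the subformulas have at most one free variable outside
  the block. So the witnesses of the block can be transported by an injective map that sends the
  value of that free variable anywhere (the \<open>G\<^sub>k\<close> are vertex-transitive) and makes the tuple an
  edge or a non-edge as required. The \<open>FOC\<^sup>2\<close> sentence ``every element has at least two
  neighbours'' holds in \<open>G\<^sub>3\<close> but not in \<open>G\<^sub>2\<close>.\<close>

lemma sat_Ex1q: "sat D I e (Ex1q x \<phi>) \<longleftrightarrow> (\<exists>d\<in>D. sat D I (e(x := d)) \<phi>)"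
  by (auto simp: card_1_singleton_iff)

lemma sat_exs_UNIV:
  "sat UNIV I e (exs xs \<phi>) \<longleftrightarrow> (\<exists>e'. (\<forall>v. v \<notin> set xs \<longrightarrow> e' v = e v) \<and> sat UNIV I e' \<phi>)"
proof (induction xs arbitrary: e)
  case Nil
  then show ?case by (auto simp: exs_def)
next
  case (Cons x xs)
  have "sat UNIV I e (exs (x # xs) \<phi>) \<longleftrightarrow> (\<exists>d. sat UNIV I (e(x := d)) (exs xs \<phi>))"
    unfolding exs_def foldr.simps o_apply by (subst sat_Ex1q) simp
  also have "\<dots> \<longleftrightarrow> (\<exists>d e'. (\<forall>v. v \<notin> set xs \<longrightarrow> e' v = (e(x := d)) v) \<and> sat UNIV I e' \<phi>)"
    by (simp add: Cons.IH)
  also have "\<dots> \<longleftrightarrow> (\<exists>e'. (\<forall>v. v \<notin> set (x # xs) \<longrightarrow> e' v = e v) \<and> sat UNIV I e' \<phi>)"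
  proof
    assume "\<exists>d e'. (\<forall>v. v \<notin> set xs \<longrightarrow> e' v = (e(x := d)) v) \<and> sat UNIV I e' \<phi>"
    then obtain d e' where "\<forall>v. v \<notin> set xs \<longrightarrow> e' v = (e(x := d)) v" "sat UNIV I e' \<phi>"
      by blast
    then show "\<exists>e'. (\<forall>v. v \<notin> set (x # xs) \<longrightarrow> e' v = e v) \<and> sat UNIV I e' \<phi>"
      by (intro exI[of _ e']) auto
  next
    assume "\<exists>e'. (\<forall>v. v \<notin> set (x # xs) \<longrightarrow> e' v = e v) \<and> sat UNIV I e' \<phi>"
    then obtain e' where "\<forall>v. v \<notin> set (x # xs) \<longrightarrow> e' v = e v" "sat UNIV I e' \<phi>"
      by blast
    then show "\<exists>d e'. (\<forall>v. v \<notin> set xs \<longrightarrow> e' v = (e(x := d)) v) \<and> sat UNIV I e' \<phi>"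
      by (intro exI[of _ "e' x"] exI[of _ e']) auto
  qed
  finally show ?case .
qed

lemma sat_bool_comb_cong:
  assumes "bool_comb S \<phi>" "\<And>s. s \<in> S \<Longrightarrow> sat D I1 e1 s \<longleftrightarrow> sat D I2 e2 s"
  shows "sat D I1 e1 \<phi> \<longleftrightarrow> sat D I2 e2 \<phi>"
  using assms by (induction rule: bool_comb.induct) auto

lemma sat_two_vars_cong:
  assumes "vars \<phi> \<subseteq> {x, y}" and "\<And>R l. card (set l) \<le> 2 \<Longrightarrow> I1 R l = I2 R l"
  shows "sat D I1 e \<phi> \<longleftrightarrow> sat D I2 e \<phi>"
  using assms(1)
proof (induction \<phi> arbitrary: e)
  case (Rel R zs)
  then have "card (set (map e zs)) \<le> card {e x, e y}"
    by (intro card_mono) auto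
  also have "\<dots> \<le> 2"
    by (simp add: card_insert_if)
  finally show ?case
    using assms(2) by simp
qed auto

definition ex_ternary :: fm where
  "ex_ternary = exs [0, 1, 2] (Rel (0, 3) [0, 1, 2])"

lemma UF1_sentence_ex_ternary: "UF1_sentence ex_ternary"
proof -
  have "uf1 {(0, 3)} (exs (0 # [1, 2]) (Rel (0, 3) [0, 1, 2]))"
    by (rule uf1.ex_all[where U = "{}" and V = "{0, 1, 2}" and F = "{Rel (0, 3) [0, 1, 2]}"])
       (auto simp: uniform_set_def tau_rel_atom_def intro: bool_comb.base)
  moreover have "fv ex_ternary = {}"
    by (auto simp: ex_ternary_def exs_def)
  ultimately show ?thesis
    unfolding UF1_sentence_def ex_ternary_def by (intro conjI exI[of _ "{(0, 3)}"]) auto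
qed

lemma not_equiv_FOC2_ex_ternary:
  assumes "FOC2_sentence \<psi>"
  shows "\<not> equiv_fm ex_ternary \<psi>"
proof
  assume equiv: "equiv_fm ex_ternary \<psi>"
  define I1 :: "rsym \<Rightarrow> nat list \<Rightarrow> bool" where "I1 R l \<longleftrightarrow> l = [0, 1, 2]" for R l
  define I2 :: "rsym \<Rightarrow> nat list \<Rightarrow> bool" where "I2 R l \<longleftrightarrow> False" for R l
  have "sat UNIV I1 id ex_ternary"
    unfolding ex_ternary_def sat_exs_UNIV by (auto simp: I1_def)
  moreover have "\<not> sat UNIV I2 id ex_ternary"
    unfolding ex_ternary_def sat_exs_UNIV by (simp add: I2_def)
  moreover have "sat UNIV I1 id \<psi> \<longleftrightarrow> sat UNIV I2 id \<psi>"
    using assms by (intro sat_two_vars_cong[of _ 0 1]) (auto simp: FOC2_sentence_def I1_def I2_def)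
  ultimately show False
    using equiv unfolding equiv_fm_def by auto
qed

text \<open>The structure \<open>G\<^sub>k\<close> on \<open>\<nat>\<close>: its cliques are the blocks \<open>{k m..<k m + k}\<close>, the edge relation
  is the symbol \<open>(0, 2)\<close>, and all other relation symbols are empty.\<close>

definition block_adj :: "nat \<Rightarrow> nat \<Rightarrow> nat \<Rightarrow> bool" where
  "block_adj k a b \<longleftrightarrow> a div k = b div k \<and> a \<noteq> b"

definition cliques :: "nat \<Rightarrow> rsym \<Rightarrow> nat list \<Rightarrow> bool" where
  "cliques k R l \<longleftrightarrow> R = (0, 2) \<and> (case l of [a, b] \<Rightarrow> block_adj k a b | _ \<Rightarrow> False)"

lemma block_adj_sym: "block_adj k a b \<longleftrightarrow> block_adj k b a"
  by (auto simp: block_adj_def)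

lemma block_adj_automorphism:
  assumes "0 < (k::nat)"
  shows "\<exists>\<sigma>. inj \<sigma> \<and> \<sigma> a = b \<and> (\<forall>x y. block_adj k (\<sigma> x) (\<sigma> y) \<longleftrightarrow> block_adj k x y)"
proof -
  define \<beta> where "\<beta> = transpose (a div k) (b div k)"
  define \<pi> where "\<pi> = transpose (a mod k) (b mod k)"
  define \<sigma> where "\<sigma> x = \<beta> (x div k) * k + \<pi> (x mod k)" for x
  have \<pi>_less: "\<pi> (x mod k) < k" for x
    using assms by (simp add: \<pi>_def transpose_def)
  have \<sigma>_div: "\<sigma> x div k = \<beta> (x div k)" and \<sigma>_mod: "\<sigma> x mod k = \<pi> (x mod k)" for x
    using \<pi>_less[of x] by (simp_all add: \<sigma>_def)
  have "inj \<sigma>"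
  proof (rule injI)
    fix x y assume "\<sigma> x = \<sigma> y"
    then have "\<beta> (x div k) = \<beta> (y div k)" "\<pi> (x mod k) = \<pi> (y mod k)"
      using \<sigma>_div \<sigma>_mod by metis+
    then have "x div k = y div k" "x mod k = y mod k"
      by (auto simp: \<beta>_def \<pi>_def dest: transpose_eq_imp_eq)
    then show "x = y" by (metis div_mult_mod_eq)
  qed
  moreover have "\<sigma> a = b"
    by (simp add: \<sigma>_def \<beta>_def \<pi>_def)
  moreover have "block_adj k (\<sigma> x) (\<sigma> y) \<longleftrightarrow> block_adj k x y" for x y
    using \<sigma>_div by (auto simp: block_adj_def \<beta>_def inj_eq[OF \<open>inj \<sigma>\<close>] dest: transpose_eq_imp_eq)
  ultimately show ?thesis by blast
qed

lemma inj_map_two_points: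
  fixes p q c d :: 'a
  assumes "p \<noteq> q" "c \<noteq> d"
  shows "\<exists>g. inj g \<and> g p = c \<and> g q = d"
proof -
  define g where "g = transpose (transpose p c q) d \<circ> transpose p c"
  have "inj g" by (simp add: g_def inj_compose inj_transpose)
  moreover have "g p = c" "g q = d"
    using assms by (auto simp: g_def transpose_def)
  ultimately show ?thesis by blast
qed

lemma block_neighbours:
  assumes "0 < (k::nat)"
  shows "{y. block_adj k x y} = {k * (x div k)..<k * (x div k) + k} - {x}"
proof -
  have block: "y div k = x div k \<longleftrightarrow> y \<in> {k * (x div k)..<k * (x div k) + k}" for y
  proof
    assume "y div k = x div k"
    then show "y \<in> {k * (x div k)..<k * (x div k) + k}"
      using assms
      by (metis atLeastLessThan_iff add.commute dividend_less_times_div times_div_less_eq_dividend)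
  next
    assume "y \<in> {k * (x div k)..<k * (x div k) + k}"
    then show "y div k = x div k"
      by (intro div_nat_eqI) (simp_all add: add.commute)
  qed
  have "{y. block_adj k x y} = {y. y div k = x div k} - {x}"
    by (auto simp: block_adj_def)
  also have "{y. y div k = x div k} = {k * (x div k)..<k * (x div k) + k}"
    by (rule set_eqI) (simp only: mem_Collect_eq block)
  finally show ?thesis .
qed

lemma card_block_neighbours:
  assumes "0 < (k::nat)"
  shows "card {y. block_adj k x y} = k - 1"
proof -
  have "x \<in> {k * (x div k)..<k * (x div k) + k}"
    using assms by (metis atLeastLessThan_iff add.commute dividend_less_times_div times_div_less_eq_dividend)
  then show ?thesis
    by (simp add: block_neighbours[OF assms])
qed

lemma block_adj_transfer:
  assumes "2 \<le> k2"
  shows "\<exists>g. inj g \<and> g r = b \<and> (block_adj k2 (g p) (g q) \<longleftrightarrow> block_adj k1 p q)"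
proof -
  obtain g0 where g0: "inj g0" "block_adj k2 (g0 p) (g0 q) \<longleftrightarrow> block_adj k1 p q"
  proof (cases "p = q")
    case True
    then show ?thesis
      using that[of id] by (simp add: block_adj_def)
  next
    case False
    define d where "d = (if block_adj k1 p q then 1 else k2)"
    have "0 \<noteq> d" "block_adj k2 0 d \<longleftrightarrow> block_adj k1 p q"
      using assms by (auto simp: block_adj_def d_def)
    then show ?thesis
      using inj_map_two_points[OF False] that by metis
  qed
  obtain \<sigma> where \<sigma>: "inj \<sigma>" "\<sigma> (g0 r) = b" "\<And>x y. block_adj k2 (\<sigma> x) (\<sigma> y) \<longleftrightarrow> block_adj k2 x y"
    using block_adj_automorphism[of k2 "g0 r" b] assms by auto
  show ?thesis
    using g0 \<sigma> by (intro exI[of _ "\<sigma> \<circ> g0"]) (simp add: inj_compose)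
qed

lemma cliques_map_inj:
  assumes "inj g" "card (set l) = 2 \<Longrightarrow> set l = {p, q}"
    and "block_adj k2 (g p) (g q) \<longleftrightarrow> block_adj k1 p q"
  shows "cliques k2 R (map g l) \<longleftrightarrow> cliques k1 R l"
proof (cases "\<exists>a b. l = [a, b] \<and> a \<noteq> b")
  case True
  then obtain a b where l: "l = [a, b]" "a \<noteq> b"
    by blast
  then have "{a, b} = {p, q}"
    using assms(2) by simp
  then have "block_adj k2 (g a) (g b) \<longleftrightarrow> block_adj k1 a b"
    using assms(3) block_adj_sym by (metis doubleton_eq_iff)
  then show ?thesis
    using l assms(1) by (simp add: cliques_def)
next
  case False
  then have "\<not> cliques k1 R l" "\<not> cliques k2 R (map g l)"
    using inj_eq[OF assms(1)] by (auto simp: cliques_def block_adj_def split: list.split)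
  then show ?thesis
    by blast
qed

lemma cliques_unary: "card (set zs) = 1 \<Longrightarrow> \<not> cliques k R (map e zs)"
  by (auto simp: cliques_def block_adj_def card_insert_if split: list.split if_splits)

definition same_eq_type :: "nat set \<Rightarrow> (nat \<Rightarrow> 'a) \<Rightarrow> (nat \<Rightarrow> 'b) \<Rightarrow> bool" where
  "same_eq_type A e1 e2 \<longleftrightarrow> (\<forall>x\<in>A. \<forall>y\<in>A. e1 x = e1 y \<longleftrightarrow> e2 x = e2 y)"

lemma same_eq_type_mono: "same_eq_type A e1 e2 \<Longrightarrow> B \<subseteq> A \<Longrightarrow> same_eq_type B e1 e2"
  unfolding same_eq_type_def by blast

lemma same_eq_type_inj:
  "inj g \<Longrightarrow> (\<And>v. v \<in> A \<Longrightarrow> e2 v = g (e1 v)) \<Longrightarrow> same_eq_type A e1 e2"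
  unfolding same_eq_type_def by (simp add: inj_eq)

lemma sat_exs_cliques_transfer:
  assumes "2 \<le> k2"
    and U_fv: "\<And>u. u \<in> U \<Longrightarrow> fv u \<subseteq> insert x0 (set xs)"
    and U_inv: "\<And>u e1 e2. u \<in> U \<Longrightarrow> same_eq_type (fv u) e1 e2 \<Longrightarrow>
                   sat UNIV (cliques k1) e1 u \<longleftrightarrow> sat UNIV (cliques k2) e2 u"
    and V: "V \<subseteq> insert x0 (set xs)" and F: "uniform_set \<tau> V F"
    and "bool_comb (U \<union> F) \<phi>"
    and "sat UNIV (cliques k1) e1 (exs xs \<phi>)"
  shows "sat UNIV (cliques k2) e2 (exs xs \<phi>)"
proof -
  obtain e1' where e1': "\<forall>v. v \<notin> set xs \<longrightarrow> e1' v = e1 v" "sat UNIV (cliques k1) e1' \<phi>"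
    using assms(7) sat_exs_UNIV by blast
  obtain p q where pq: "card (e1' ` V) = 2 \<Longrightarrow> e1' ` V = {p, q}"
    by (metis card_2_iff)
  obtain g where g: "inj g" "g (e1' x0) = e2 x0" "block_adj k2 (g p) (g q) \<longleftrightarrow> block_adj k1 p q"
    using block_adj_transfer[OF assms(1)] by blast
  define e2' where "e2' v = (if v \<in> set xs then g (e1' v) else e2 v)" for v
  have e2'_block: "e2' v = g (e1' v)" if "v \<in> insert x0 (set xs)" for v
    using that g(2) e1'(1) by (auto simp: e2'_def)
  have "sat UNIV (cliques k1) e1' s \<longleftrightarrow> sat UNIV (cliques k2) e2' s" if "s \<in> U \<union> F" for s
  proof (cases "s \<in> U")
    case True
    have "same_eq_type (fv s) e1' e2'"
      using U_fv[OF True] e2'_block by (intro same_eq_type_inj[OF g(1)]) auto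
    then show ?thesis
      using U_inv[OF True] by blast
  next
    case False
    with that F obtain R zs where s: "s = Rel R zs" "set zs = V"
      unfolding uniform_set_def tau_rel_atom_def by force
    have "map e2' zs = map g (map e1' zs)"
      using V s(2) e2'_block by auto
    moreover have "cliques k2 R (map g (map e1' zs)) \<longleftrightarrow> cliques k1 R (map e1' zs)"
      using pq s(2) by (intro cliques_map_inj[OF g(1) _ g(3)]) auto
    ultimately show ?thesis
      using s(1) by (metis sat.simps(3))
  qed
  then have "sat UNIV (cliques k2) e2' \<phi>"
    using sat_bool_comb_cong[OF assms(6)] e1'(2) by blast
  then show ?thesis
    unfolding sat_exs_UNIV by (intro exI[of _ e2']) (auto simp: e2'_def)
qed

lemma sat_exs_cliques_invariant:
  assumes "2 \<le> k1" "2 \<le> k2"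
    and "\<And>u. u \<in> U \<Longrightarrow> fv u \<subseteq> insert x0 (set xs)"
    and "\<And>u k1 k2 e1 e2. u \<in> U \<Longrightarrow> 2 \<le> k1 \<Longrightarrow> 2 \<le> k2 \<Longrightarrow> same_eq_type (fv u) e1 e2 \<Longrightarrow>
           sat UNIV (cliques k1) e1 u \<longleftrightarrow> sat UNIV (cliques k2) e2 u"
    and "V \<subseteq> insert x0 (set xs)" "uniform_set \<tau> V F" "bool_comb (U \<union> F) \<phi>"
  shows "sat UNIV (cliques k1) e1 (exs xs \<phi>) \<longleftrightarrow> sat UNIV (cliques k2) e2 (exs xs \<phi>)"
  using sat_exs_cliques_transfer[OF assms(2,3) assms(4)[OF _ assms(1,2)] assms(5-7), of e1 e2]
    sat_exs_cliques_transfer[OF assms(1,3) assms(4)[OF _ assms(2,1)] assms(5-7), of e2 e1]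
  by blast

lemma sat_cliques_uf1_invariant:
  assumes "uf1 \<tau> \<phi>" "2 \<le> k1" "2 \<le> k2" "same_eq_type (fv \<phi>) e1 e2"
  shows "sat UNIV (cliques k1) e1 \<phi> \<longleftrightarrow> sat UNIV (cliques k2) e2 \<phi>"
  using assms
proof (induction arbitrary: k1 k2 e1 e2 rule: uf1.induct)
  case (unary_rel R zs)
  then show ?case
    using cliques_unary[OF unary_rel(3)] by simp
next
  case (eq x y)
  then show ?case
    by (simp add: same_eq_type_def)
next
  case (neg \<phi>)
  then have "same_eq_type (fv \<phi>) e1 e2"
    by simp
  with neg.IH[OF neg.prems(1,2)] show ?case
    by simp
next
  case (conj \<phi> \<psi>)
  then have "same_eq_type (fv \<phi>) e1 e2" "same_eq_type (fv \<psi>) e1 e2"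
    by (auto elim: same_eq_type_mono)
  then have "sat UNIV (cliques k1) e1 \<phi> \<longleftrightarrow> sat UNIV (cliques k2) e2 \<phi>"
    "sat UNIV (cliques k1) e1 \<psi> \<longleftrightarrow> sat UNIV (cliques k2) e2 \<psi>"
    using conj.IH conj.prems(1,2) by blast+
  then show ?case
    by simp
next
  case (ex_rest x0 xs U V F \<phi>)
  show ?case
  proof (rule sat_exs_cliques_invariant)
    show "\<And>u. u \<in> U \<Longrightarrow> fv u \<subseteq> insert x0 (set xs)"
      using ex_rest by auto
    show "\<And>u k1 k2 e1 e2. u \<in> U \<Longrightarrow> 2 \<le> k1 \<Longrightarrow> 2 \<le> k2 \<Longrightarrow> same_eq_type (fv u) e1 e2 \<Longrightarrow>
           sat UNIV (cliques k1) e1 u \<longleftrightarrow> sat UNIV (cliques k2) e2 u"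
      using ex_rest by blast
  qed (use ex_rest in auto)
next
  case (ex_all x0 xs U V F \<phi>)
  show ?case
  proof (rule sat_exs_cliques_invariant[of k1 k2 U x0 "x0 # xs"])
    show "\<And>u. u \<in> U \<Longrightarrow> fv u \<subseteq> insert x0 (set (x0 # xs))"
      using ex_all by auto
    show "\<And>u k1 k2 e1 e2. u \<in> U \<Longrightarrow> 2 \<le> k1 \<Longrightarrow> 2 \<le> k2 \<Longrightarrow> same_eq_type (fv u) e1 e2 \<Longrightarrow>
           sat UNIV (cliques k1) e1 u \<longleftrightarrow> sat UNIV (cliques k2) e2 u"
      using ex_all by blast
  qed (use ex_all in auto)
qed simp_all

definition all_two_neighbours :: fm where
  "all_two_neighbours = Neg (Ex1q 0 (Neg (ExGe 2 1 (Rel (0, 2) [0, 1]))))"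

lemma FOC2_sentence_all_two_neighbours: "FOC2_sentence all_two_neighbours"
  by (auto simp: FOC2_sentence_def all_two_neighbours_def)

lemma ex_subset_card_iff:
  "finite A \<Longrightarrow> (\<exists>S. finite S \<and> card S = n \<and> S \<subseteq> A) \<longleftrightarrow> n \<le> card A"
  by (metis card_mono obtain_subset_with_card_n)

lemma sat_cliques_all_two_neighbours:
  assumes "0 < k"
  shows "sat UNIV (cliques k) e all_two_neighbours \<longleftrightarrow> 3 \<le> k"
proof -
  have "sat UNIV (cliques k) e all_two_neighbours \<longleftrightarrow>
        (\<forall>x. \<exists>S. finite S \<and> card S = 2 \<and> S \<subseteq> {y. block_adj k x y})"
    unfolding all_two_neighbours_def sat.simps(5) sat_Ex1q by (simp add: cliques_def subset_eq conj_ac)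
  also have "\<dots> \<longleftrightarrow> (\<forall>x. 2 \<le> card {y. block_adj k x y})"
    by (simp add: ex_subset_card_iff block_neighbours[OF assms])
  also have "\<dots> \<longleftrightarrow> 3 \<le> k"
    using card_block_neighbours[OF assms] by auto
  finally show ?thesis .
qed

theorem mainTheorem4:
  shows "\<not> leq_logic UF1_sentence FOC2_sentence \<and> \<not> leq_logic FOC2_sentence UF1_sentence"
proof
  show "\<not> leq_logic UF1_sentence FOC2_sentence"
    using UF1_sentence_ex_ternary not_equiv_FOC2_ex_ternary unfolding leq_logic_def by blast
  show "\<not> leq_logic FOC2_sentence UF1_sentence"
  proof
    assume "leq_logic FOC2_sentence UF1_sentence"
    then obtain \<psi> \<tau> where "equiv_fm all_two_neighbours \<psi>" "uf1 \<tau> \<psi>" "fv \<psi> = {}"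
      using FOC2_sentence_all_two_neighbours unfolding leq_logic_def UF1_sentence_def by blast
    then have "sat UNIV (cliques 2) id all_two_neighbours \<longleftrightarrow>
               sat UNIV (cliques 3) id all_two_neighbours"
      using sat_cliques_uf1_invariant[of \<tau> \<psi> 2 3 id id] unfolding equiv_fm_def same_eq_type_def
      by auto
    then show False
      using sat_cliques_all_two_neighbours[of 2] sat_cliques_all_two_neighbours[of 3] by simp
  qed
qed

end
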